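(* For all $c>0$ and $b\ge\max\{c,2\}$, the function $g(x)=\frac{x+b}{x+c}$ on $[0,\infty)$ satisfies $x^2g''(x)-g(\alpha)\,g(x/\alpha)\le0$ for all $x\ge0$ and $\alpha>0$; i.e. $g\in\mathcal{T}^{+}$.
   Context: $\mathcal{T}^{+}$ is the set of functions $g:[0,\infty)\to[0,\infty)$ with $x^2g''(x)-g(\alpha)g(x/\alpha)\le0$ for all $x\ge0$, $\alpha>0$. *)

theory Defs
  imports "HOL-Analysis.Analysis"
begin

text \<open>The class T-plus: functions g from [0,oo) to [0,oo) with
  x^2 g''(x) - g(alpha) g(x/alpha) <= 0 for all x >= 0 and alpha > 0.
  Functions are modelled as real => real; only values on [0,oo) matter,
  and g'' is the (iterated) derivative deriv (deriv g).\<close>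
definition Tplus :: "(real \<Rightarrow> real) set" where
  "Tplus = {g. (\<forall>x\<ge>0. g x \<ge> 0) \<and>
     (\<forall>x\<ge>0. \<forall>\<alpha>>0. x\<^sup>2 * deriv (deriv g) x - g \<alpha> * g (x / \<alpha>) \<le> 0)}"

end

theory Submission
  imports Defs
begin

text \<open>For \<open>g x = (x + b) / (x + c)\<close> one has \<open>g'' x = 2 (b - c) / (x + c)\<^sup>3\<close>, and with
  \<open>s = \<alpha> + x / \<alpha> \<ge> 0\<close> the product \<open>g \<alpha> * g (x / \<alpha>)\<close> equals
  \<open>(x + b s + b\<^sup>2) / (x + c s + c\<^sup>2)\<close>. After clearing denominators the required
  inequality is affine in \<open>s\<close>, so it suffices to compare the constant coefficients
  (this is where \<open>b \<ge> 2\<close> and \<open>b \<ge> c\<close> enter) and the coefficients of \<open>s\<close>.\<close>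

lemma DERIV_shifted_quotient:
  fixes b c y :: real
  assumes "y + c \<noteq> 0"
  shows "((\<lambda>x. (x + b) / (x + c)) has_real_derivative (c - b) / (y + c)^2) (at y)"
  using assms by (auto intro!: derivative_eq_intros simp: field_simps power2_eq_square)

lemma deriv2_shifted_quotient:
  fixes b c x :: real
  assumes "x + c \<noteq> 0"
  shows "deriv (deriv (\<lambda>x. (x + b) / (x + c))) x = 2 * (b - c) / (x + c)^3"
proof -
  have "((\<lambda>y. (c - b) / (y + c)^2) has_real_derivative 2 * (b - c) / (x + c)^3) (at x)"
    using assms by (auto intro!: derivative_eq_intros simp: divide_simps)
      (simp add: algebra_simps eval_nat_numeral)
  then have "(deriv (\<lambda>x. (x + b) / (x + c)) has_real_derivative 2 * (b - c) / (x + c)^3) (at x)"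
    by (rule has_field_derivative_transform_within_open[where S = "- {-c}"])
      (use assms in \<open>auto intro!: DERIV_imp_deriv[symmetric] DERIV_shifted_quotient\<close>)
  then show ?thesis
    by (rule DERIV_imp_deriv)
qed

lemma shifted_quotient_product:
  fixes a b c x :: real
  assumes "a \<noteq> 0"
  shows "(a + b) / (a + c) * ((x / a + b) / (x / a + c))
    = (x + b * (a + x / a) + b^2) / (x + c * (a + x / a) + c^2)"
proof -
  have "(a + d) * (x / a + d) = x + d * (a + x / a) + d^2" for d
    using assms by (simp add: field_simps power2_eq_square)
  then show ?thesis
    by (simp add: times_divide_times_eq)
qed

lemma curvature_bound_coeff0:
  fixes b c x :: real
  assumes "0 \<le> c" "c \<le> b" "2 \<le> b" "0 \<le> x"
  shows "2 * (b - c) * x^2 * (x + c^2) \<le> (x + c)^3 * (x + b^2)"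
proof -
  have "2 * (b - c) * x^2 * (x + c^2) \<le> 2 * b * x^3 + 2 * b * c^2 * x^2"
    using assms by (simp add: algebra_simps power2_eq_square power3_eq_cube)
  also have "\<dots> \<le> b^2 * x^3 + 3 * c * b^2 * x^2"
  proof (rule add_mono)
    show "2 * b * x^3 \<le> b^2 * x^3"
      using assms by (intro mult_right_mono) (auto simp: power2_eq_square)
    have "2 * b * c^2 \<le> 3 * c * b^2"
      using assms by (simp add: power2_eq_square mult_mono mult_left_mono)
    then show "2 * b * c^2 * x^2 \<le> 3 * c * b^2 * x^2"
      by (simp add: mult_right_mono)
  qed
  also have "\<dots> \<le> (x + c)^3 * (x + b^2)"
  proof -
    have "(x + c)^3 * (x + b^2) - (b^2 * x^3 + 3 * c * b^2 * x^2)
        = x^4 + 3*c*x^3 + 3*c^2*x^2 + c^3*x + 3*c^2*b^2*x + c^3*b^2"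
      by (simp add: algebra_simps power2_eq_square power3_eq_cube power4_eq_xxxx)
    also have "\<dots> \<ge> 0"
      using assms by simp
    finally show ?thesis by simp
  qed
  finally show ?thesis .
qed

lemma curvature_bound_coeff1:
  fixes b c x :: real
  assumes "0 \<le> c" "c \<le> b" "0 \<le> x"
  shows "2 * (b - c) * x^2 * c \<le> (x + c)^3 * b"
proof -
  have cube: "3 * x^2 * c \<le> (x + c)^3"
  proof -
    have "(x + c)^3 - 3 * x^2 * c = x^3 + 3*x*c^2 + c^3"
      by (simp add: algebra_simps power2_eq_square power3_eq_cube)
    also have "\<dots> \<ge> 0"
      using assms by simp
    finally show ?thesis by simp
  qed
  have "2 * (b - c) * x^2 * c = 2 * (b - c) * (x^2 * c)" by simp
  also have "\<dots> \<le> 3 * b * (x^2 * c)"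
    using assms by (intro mult_right_mono) auto
  also have "\<dots> = b * (3 * x^2 * c)" by simp
  also have "\<dots> \<le> b * (x + c)^3"
    using assms cube by (intro mult_left_mono) auto
  finally show ?thesis by (simp add: mult.commute)
qed

lemma curvature_bound:
  fixes b c x s :: real
  assumes "0 < c" "c \<le> b" "2 \<le> b" "0 \<le> x" "0 \<le> s"
  shows "x^2 * (2 * (b - c) / (x + c)^3) \<le> (x + b * s + b^2) / (x + c * s + c^2)"
proof -
  have "2 * (b - c) * x^2 * (x + c * s + c^2)
      = 2 * (b - c) * x^2 * (x + c^2) + (2 * (b - c) * x^2 * c) * s"
    by (simp add: algebra_simps)
  also have "\<dots> \<le> (x + c)^3 * (x + b^2) + ((x + c)^3 * b) * s"
    using assms curvature_bound_coeff0 curvature_bound_coeff1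
    by (intro add_mono mult_right_mono) auto
  also have "\<dots> = (x + c)^3 * (x + b * s + b^2)"
    by (simp add: algebra_simps)
  finally have "2 * (b - c) * x^2 * (x + c * s + c^2) \<le> (x + c)^3 * (x + b * s + b^2)" .
  moreover have "0 < x + c" "0 < x + c * s + c^2"
    using assms by (auto intro: add_nonneg_pos)
  ultimately show ?thesis
    by (simp add: divide_simps mult.commute mult.left_commute)
qed

theorem lemma11:
  fixes b c :: real
  assumes "c > 0" and "b \<ge> max c 2"
  shows "(\<lambda>x. (x + b) / (x + c)) \<in> Tplus"
  unfolding Tplus_def
proof (intro CollectI conjI allI impI)
  fix x :: real
  assume "x \<ge> 0"
  then show "(x + b) / (x + c) \<ge> 0"
    using assms by auto
next
  fix x \<alpha> :: real
  assume x: "x \<ge> 0" and \<alpha>: "\<alpha> > 0"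
  have "x\<^sup>2 * deriv (deriv (\<lambda>x. (x + b) / (x + c))) x = x^2 * (2 * (b - c) / (x + c)^3)"
    using x assms by (simp add: deriv2_shifted_quotient)
  also have "\<dots> \<le> (x + b * (\<alpha> + x / \<alpha>) + b^2) / (x + c * (\<alpha> + x / \<alpha>) + c^2)"
    using x \<alpha> assms by (intro curvature_bound) auto
  also have "\<dots> = (\<alpha> + b) / (\<alpha> + c) * ((x / \<alpha> + b) / (x / \<alpha> + c))"
    using \<alpha> by (intro shifted_quotient_product[symmetric]) simp
  finally show "x\<^sup>2 * deriv (deriv (\<lambda>x. (x + b) / (x + c))) x
      - (\<alpha> + b) / (\<alpha> + c) * ((x / \<alpha> + b) / (x / \<alpha> + c)) \<le> 0"
    by simp
qed

end
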